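(* Let $T$ be a recurrent operator on a separable Fréchet space $X$. Then every sequence $\omega\in\mathfrak{C}$ admits a subsequence which is stationary.
   Context: For a continuous linear operator $T$ on a Fréchet space $X$: $x$ is recurrent if $T^{\omega_n}x\to x$ for some strictly increasing sequence $(\omega_n)$ of positive integers; $T$ is recurrent if the set of recurrent vectors is dense. $\mathfrak{C}$ is the set of strictly increasing sequences $\omega=(\omega_n)$ of positive integers such that $T^{\omega_n}x\to x$ for some $x\neq 0$; for $\omega\in\mathfrak{C}$, $\mathfrak{L}(\omega)=\{x\in X:T^{\omega_n}x\to x\}$. A sequence $\omega\in\mathfrak{C}$ is stationary if $\overline{\mathfrak{L}(\omega)}=\overline{\mathfrak{L}(\mu)}$ for every subsequence $\mu$ of $\omega$. *)

theory Defs
  imports "HOL-Analysis.Analysis"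
begin

text \<open>A Frechet space is modelled as a real vector space carrying a countable
  family of seminorms p 0, p 1, ... which separates points and for which the
  induced (metrizable, locally convex) topology is complete.  Complex Frechet
  spaces are in particular real Frechet spaces.\<close>

definition seminorm :: "('a::real_vector \<Rightarrow> real) \<Rightarrow> bool" where
  "seminorm q \<longleftrightarrow> (\<forall>x. 0 \<le> q x) \<and> (\<forall>x y. q (x + y) \<le> q x + q y)
                   \<and> (\<forall>c x. q (c *\<^sub>R x) = \<bar>c\<bar> * q x)"

definition fs_topology :: "(nat \<Rightarrow> 'a::real_vector \<Rightarrow> real) \<Rightarrow> 'a topology" where
  "fs_topology p = topology (\<lambda>U. \<forall>x\<in>U. \<exists>k. \<exists>e>0. {y. \<forall>j\<le>k. p j (y - x) < e} \<subseteq> U)"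

definition fs_cauchy :: "(nat \<Rightarrow> 'a::real_vector \<Rightarrow> real) \<Rightarrow> (nat \<Rightarrow> 'a) \<Rightarrow> bool" where
  "fs_cauchy p xs \<longleftrightarrow> (\<forall>k. \<forall>e>0. \<exists>N. \<forall>m\<ge>N. \<forall>n\<ge>N. p k (xs m - xs n) < e)"

definition frechet_space :: "(nat \<Rightarrow> 'a::real_vector \<Rightarrow> real) \<Rightarrow> bool" where
  "frechet_space p \<longleftrightarrow> (\<forall>k. seminorm (p k))
     \<and> (\<forall>x. (\<forall>k. p k x = 0) \<longrightarrow> x = 0)
     \<and> (\<forall>xs. fs_cauchy p xs \<longrightarrow> (\<exists>x. limitin (fs_topology p) xs x sequentially))"

definition separable_fs :: "(nat \<Rightarrow> 'a::real_vector \<Rightarrow> real) \<Rightarrow> bool" where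
  "separable_fs p \<longleftrightarrow> (\<exists>D. countable D \<and> (fs_topology p) closure_of D = UNIV)"

definition continuous_linear_op :: "(nat \<Rightarrow> 'a::real_vector \<Rightarrow> real) \<Rightarrow> ('a \<Rightarrow> 'a) \<Rightarrow> bool" where
  "continuous_linear_op p T \<longleftrightarrow> linear T \<and> continuous_map (fs_topology p) (fs_topology p) T"

definition pos_strict_seq :: "(nat \<Rightarrow> nat) \<Rightarrow> bool" where
  "pos_strict_seq \<omega> \<longleftrightarrow> strict_mono \<omega> \<and> (\<forall>n. 0 < \<omega> n)"

definition rec_set :: "(nat \<Rightarrow> 'a::real_vector \<Rightarrow> real) \<Rightarrow> ('a \<Rightarrow> 'a) \<Rightarrow> (nat \<Rightarrow> nat) \<Rightarrow> 'a set" where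
  "rec_set p T \<omega> = {x. limitin (fs_topology p) (\<lambda>n. (T ^^ \<omega> n) x) x sequentially}"

definition recurrent_vector :: "(nat \<Rightarrow> 'a::real_vector \<Rightarrow> real) \<Rightarrow> ('a \<Rightarrow> 'a) \<Rightarrow> 'a \<Rightarrow> bool" where
  "recurrent_vector p T x \<longleftrightarrow> (\<exists>\<omega>. pos_strict_seq \<omega> \<and> x \<in> rec_set p T \<omega>)"

definition recurrent_op :: "(nat \<Rightarrow> 'a::real_vector \<Rightarrow> real) \<Rightarrow> ('a \<Rightarrow> 'a) \<Rightarrow> bool" where
  "recurrent_op p T \<longleftrightarrow> (fs_topology p) closure_of {x. recurrent_vector p T x} = UNIV"

definition rec_seqs :: "(nat \<Rightarrow> 'a::real_vector \<Rightarrow> real) \<Rightarrow> ('a \<Rightarrow> 'a) \<Rightarrow> (nat \<Rightarrow> nat) set" where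
  "rec_seqs p T = {\<omega>. pos_strict_seq \<omega> \<and> (\<exists>x. x \<noteq> 0 \<and> x \<in> rec_set p T \<omega>)}"

text \<open>Subsequences of \<omega> are exactly \<omega> \<circ> r with r strictly increasing.\<close>
definition stationary :: "(nat \<Rightarrow> 'a::real_vector \<Rightarrow> real) \<Rightarrow> ('a \<Rightarrow> 'a) \<Rightarrow> (nat \<Rightarrow> nat) \<Rightarrow> bool" where
  "stationary p T \<omega> \<longleftrightarrow> \<omega> \<in> rec_seqs p T \<and>
     (\<forall>r. strict_mono r \<longrightarrow>
        (fs_topology p) closure_of (rec_set p T \<omega>) = (fs_topology p) closure_of (rec_set p T (\<omega> \<circ> r)))"

end

theory Submission
  imports Defs "HOL-Library.Diagonal_Subsequence"
begin

text \<open>Since the topology is second countable, the closure of a set is determined by which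
  members of a countable base \<open>B 0, B 1, \<dots>\<close> it meets. Passing to a subsequence of \<open>\<omega>\<close>
  can only enlarge \<open>\<LL>\<close>, so for each \<open>k\<close> one may thin \<open>\<omega>\<close> out until either \<open>\<LL>\<close> meets
  \<open>B k\<close> or no further subsequence ever makes it meet \<open>B k\<close>; this property persists under
  subsequences. A diagonal subsequence has it for every \<open>k\<close> (dropping finitely many terms
  does not change \<open>\<LL>\<close>), and then no subsequence can enlarge the closure of \<open>\<LL>\<close>.\<close>

lemma seminorm_zero:
  assumes "seminorm q" shows "q 0 = 0"
proof -
  have "q (0 *\<^sub>R 0) = \<bar>0\<bar> * q 0"
    using assms unfolding seminorm_def by blast
  then show ?thesis by simp
qed

lemma seminorm_minus_commute:
  assumes "seminorm q" shows "q (x - y) = q (y - x)"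
proof -
  have "q ((-1) *\<^sub>R (y - x)) = \<bar>-1\<bar> * q (y - x)"
    using assms unfolding seminorm_def by blast
  then show ?thesis by simp
qed

lemma seminorm_triangle_diff:
  assumes "seminorm q" shows "q (z - x) \<le> q (z - y) + q (y - x)"
proof -
  have "q ((z - y) + (y - x)) \<le> q (z - y) + q (y - x)"
    using assms unfolding seminorm_def by blast
  then show ?thesis by simp
qed

definition fball :: "(nat \<Rightarrow> 'a::real_vector \<Rightarrow> real) \<Rightarrow> nat \<Rightarrow> real \<Rightarrow> 'a \<Rightarrow> 'a set" where
  "fball p k e x = {y. \<forall>j\<le>k. p j (y - x) < e}"

lemma fball_mono:
  assumes "k \<le> k'" "e' \<le> e" shows "fball p k' e' x \<subseteq> fball p k e x"
  using assms unfolding fball_def by (clarsimp, meson le_trans less_le_trans)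

lemma centre_in_fball:
  assumes "\<forall>k. seminorm (p k)" "0 < e" shows "x \<in> fball p k e x"
  using assms unfolding fball_def by (simp add: seminorm_zero)

lemma fball_commute:
  assumes "\<forall>k. seminorm (p k)" shows "y \<in> fball p k e x \<longleftrightarrow> x \<in> fball p k e y"
  using assms unfolding fball_def by (simp add: seminorm_minus_commute)

lemma fball_subset_fball:
  assumes "\<forall>k. seminorm (p k)" "y \<in> fball p k e' x"
  shows "fball p k e y \<subseteq> fball p k (e + e') x"
proof
  fix z assume z: "z \<in> fball p k e y"
  show "z \<in> fball p k (e + e') x"
    unfolding fball_def
  proof (intro CollectI allI impI)
    fix j assume "j \<le> k"
    moreover have "p j (z - x) \<le> p j (z - y) + p j (y - x)"
      using assms(1) seminorm_triangle_diff by blast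
    ultimately show "p j (z - x) < e + e'"
      using z assms(2) unfolding fball_def by fastforce
  qed
qed

lemma istopology_fball_open:
  "istopology (\<lambda>U. \<forall>x\<in>U. \<exists>k. \<exists>e>0. fball p k e x \<subseteq> U)"
  unfolding istopology_def
proof (intro conjI allI impI ballI)
  fix S U x
  assume "\<forall>x\<in>S. \<exists>k. \<exists>e>0. fball p k e x \<subseteq> S" "\<forall>x\<in>U. \<exists>k. \<exists>e>0. fball p k e x \<subseteq> U"
    and "x \<in> S \<inter> U"
  then obtain k e k' e' where "0 < e" "fball p k e x \<subseteq> S" "0 < e'" "fball p k' e' x \<subseteq> U"
    by blast
  moreover have "fball p (max k k') (min e e') x \<subseteq> fball p k e x \<inter> fball p k' e' x"
    using fball_mono[OF max.cobounded1 min.cobounded1] fball_mono[OF max.cobounded2 min.cobounded2]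
    by blast
  ultimately have "0 < min e e'" "fball p (max k k') (min e e') x \<subseteq> S \<inter> U"
    by (simp, blast)
  then show "\<exists>k. \<exists>e>0. fball p k e x \<subseteq> S \<inter> U"
    by blast
next
  fix \<K> x
  assume "\<forall>U\<in>\<K>. \<forall>x\<in>U. \<exists>k. \<exists>e>0. fball p k e x \<subseteq> U" "x \<in> \<Union>\<K>"
  then obtain U k e where "U \<in> \<K>" "0 < e" "fball p k e x \<subseteq> U"
    by blast
  then show "\<exists>k. \<exists>e>0. fball p k e x \<subseteq> \<Union>\<K>"
    by blast
qed

lemma openin_fs_topology:
  "openin (fs_topology p) U \<longleftrightarrow> (\<forall>x\<in>U. \<exists>k. \<exists>e>0. fball p k e x \<subseteq> U)"
proof -
  have "openin (fs_topology p) = (\<lambda>U. \<forall>x\<in>U. \<exists>k. \<exists>e>0. fball p k e x \<subseteq> U)"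
    unfolding fs_topology_def fball_def
    by (rule topology_inverse'[OF istopology_fball_open[unfolded fball_def]])
  then show ?thesis by simp
qed

lemma openin_fball:
  assumes "\<forall>k. seminorm (p k)" shows "openin (fs_topology p) (fball p k e x)"
  unfolding openin_fs_topology
proof
  fix y assume y: "y \<in> fball p k e x"
  define M where "M = Max ((\<lambda>j. p j (y - x)) ` {..k})"
  have "M < e"
    using Max_in[of "(\<lambda>j. p j (y - x)) ` {..k}"] y unfolding M_def fball_def by auto
  have "y \<in> fball p k ((M + e) / 2) x"
    unfolding fball_def
  proof (intro CollectI allI impI)
    fix j assume "j \<le> k"
    then have "p j (y - x) \<le> M"
      unfolding M_def by simp
    then show "p j (y - x) < (M + e) / 2"
      using \<open>M < e\<close> field_less_half_sum order_le_less_trans by blast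
  qed
  then have "fball p k ((e - M) / 2) y \<subseteq> fball p k ((e - M) / 2 + (M + e) / 2) x"
    by (rule fball_subset_fball[OF assms])
  moreover have "(e - M) / 2 + (M + e) / 2 = e"
    by (simp add: field_simps)
  ultimately have "fball p k ((e - M) / 2) y \<subseteq> fball p k e x"
    by simp
  then show "\<exists>k' e'. 0 < e' \<and> fball p k' e' y \<subseteq> fball p k e x"
    using \<open>M < e\<close> by (intro exI[of _ k] exI[of _ "(e - M) / 2"]) simp
qed

lemma second_countable_fs_topology:
  assumes seminorms: "\<forall>k. seminorm (p k)" and "separable_fs p"
  shows "second_countable (fs_topology p)"
proof -
  obtain D where "countable D" and dense: "fs_topology p closure_of D = UNIV"
    using \<open>separable_fs p\<close> unfolding separable_fs_def by blast
  define \<B> where "\<B> = (\<lambda>(d, k, m). fball p k (1 / real (Suc m)) d) ` (D \<times> UNIV \<times> UNIV)"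
  have "\<exists>V\<in>\<B>. x \<in> V \<and> V \<subseteq> U" if U: "openin (fs_topology p) U" "x \<in> U" for U x
  proof -
    obtain k e where "0 < e" and ball_U: "fball p k e x \<subseteq> U"
      using U unfolding openin_fs_topology by blast
    have "0 < e / 2"
      using \<open>0 < e\<close> by simp
    then obtain m where m: "1 / real (Suc m) < e / 2"
      by (rule nat_approx_posE)
    define \<rho> where "\<rho> = 1 / real (Suc m)"
    have "0 < \<rho>"
      unfolding \<rho>_def by simp
    have "\<rho> + \<rho> \<le> e"
      using m unfolding \<rho>_def by linarith
    have "x \<in> fs_topology p closure_of D"
      using dense by simp
    then have "\<exists>d. d \<in> D \<and> d \<in> fball p k \<rho> x"
      using openin_fball[OF seminorms, of k \<rho> x] centre_in_fball[OF seminorms \<open>0 < \<rho>\<close>, of x k]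
      unfolding in_closure_of by blast
    then obtain d where "d \<in> D" and d: "d \<in> fball p k \<rho> x"
      by blast
    have "fball p k \<rho> d \<subseteq> fball p k e x"
      by (rule order_trans[OF fball_subset_fball[OF seminorms d] fball_mono[OF order_refl \<open>\<rho> + \<rho> \<le> e\<close>]])
    moreover have "x \<in> fball p k \<rho> d"
      using d fball_commute[OF seminorms] by blast
    moreover have "fball p k \<rho> d \<in> \<B>"
      using \<open>d \<in> D\<close> unfolding \<B>_def \<rho>_def by force
    ultimately show ?thesis
      using ball_U by blast
  qed
  moreover have "countable \<B>"
    unfolding \<B>_def using \<open>countable D\<close> by simp
  moreover have "\<forall>V\<in>\<B>. openin (fs_topology p) V"
    unfolding \<B>_def using openin_fball[OF seminorms] by auto
  ultimately show ?thesis
    unfolding second_countable_def by blast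
qed

lemma strict_mono_shift_commute:
  fixes r :: "nat \<Rightarrow> nat"
  assumes "strict_mono r" shows "\<exists>r'. strict_mono r' \<and> r \<circ> (+) m = (+) m \<circ> r'"
proof -
  have ge: "m + i \<le> r (m + i)" for i
    using seq_suble[OF assms] by blast
  have "m \<le> r (m + i)" for i
    using ge[of i] by linarith
  then have "r \<circ> (+) m = (+) m \<circ> (\<lambda>i. r (m + i) - m)"
    by (simp add: fun_eq_iff le_add_diff_inverse)
  moreover have "strict_mono (\<lambda>i. r (m + i) - m)"
    unfolding strict_mono_def
  proof (intro allI impI)
    fix i j :: nat assume "i < j"
    then have "r (m + i) < r (m + j)"
      using assms unfolding strict_mono_def by simp
    then show "r (m + i) - m < r (m + j) - m"
      using ge[of i] by linarith
  qed
  ultimately show ?thesis by blast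
qed

lemma diagonal_subsequence_stably_meets:
  fixes L :: "(nat \<Rightarrow> nat) \<Rightarrow> 'a set" and B :: "nat \<Rightarrow> 'a set"
  assumes mono: "\<And>s r. strict_mono r \<Longrightarrow> L s \<subseteq> L (s \<circ> r)"
    and shift: "\<And>s m. L (s \<circ> (+) m) \<subseteq> L s"
  shows "\<exists>d. strict_mono d \<and> (\<forall>r k. strict_mono r \<longrightarrow> L (d \<circ> r) \<inter> B k \<noteq> {} \<longrightarrow> L d \<inter> B k \<noteq> {})"
proof -
  define P where "P k s \<longleftrightarrow> L s \<inter> B k \<noteq> {} \<or> (\<forall>r. strict_mono r \<longrightarrow> L (s \<circ> r) \<inter> B k = {})"
    for k s
  interpret subseqs P
  proof
    fix k and s :: "nat \<Rightarrow> nat"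
    show "\<exists>r'. strict_mono r' \<and> P k (s \<circ> r')"
    proof (cases "\<exists>r. strict_mono r \<and> L (s \<circ> r) \<inter> B k \<noteq> {}")
      case True
      then show ?thesis unfolding P_def by blast
    next
      case False
      then have "P k (s \<circ> id)"
        unfolding P_def by simp
      then show ?thesis
        using strict_mono_id by blast
    qed
  qed
  have stable: "P k (s \<circ> r)" if "strict_mono r" "P k s" for k s r
    using that mono[OF that(1), of s] strict_mono_o[OF that(1)]
    unfolding P_def by (metis comp_assoc disjoint_iff subsetD)
  have "L diagseq \<inter> B k \<noteq> {}" if "strict_mono r" "L (diagseq \<circ> r) \<inter> B k \<noteq> {}" for r k
  proof -
    obtain r' where "strict_mono r'" and r': "r \<circ> (+) (Suc k) = (+) (Suc k) \<circ> r'"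
      using strict_mono_shift_commute[OF \<open>strict_mono r\<close>] by blast
    have "L (diagseq \<circ> r) \<subseteq> L (diagseq \<circ> (+) (Suc k) \<circ> r')"
      using mono[of "(+) (Suc k)" "diagseq \<circ> r"] r' by (simp add: strict_mono_def comp_assoc)
    then have "L (diagseq \<circ> (+) (Suc k)) \<inter> B k \<noteq> {}"
      using diagseq_holds[OF stable, of k] \<open>strict_mono r'\<close> that(2) unfolding P_def by blast
    then show ?thesis
      using shift by blast
  qed
  then show ?thesis
    using subseq_diagseq by blast
qed

lemma closure_of_subset_if_meets_base:
  assumes "\<forall>V\<in>\<B>. openin X V"
    and "\<forall>U x. openin X U \<and> x \<in> U \<longrightarrow> (\<exists>V\<in>\<B>. x \<in> V \<and> V \<subseteq> U)"
    and "\<forall>V\<in>\<B>. S \<inter> V \<noteq> {} \<longrightarrow> S' \<inter> V \<noteq> {}"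
  shows "X closure_of S \<subseteq> X closure_of S'"
proof
  fix x assume x: "x \<in> X closure_of S"
  show "x \<in> X closure_of S'"
    unfolding in_closure_of
  proof (intro conjI allI impI)
    show "x \<in> topspace X"
      by (rule subsetD[OF closure_of_subset_topspace x])
    fix U assume "x \<in> U \<and> openin X U"
    then obtain V where "V \<in> \<B>" "x \<in> V" "V \<subseteq> U"
      using assms(2) by blast
    moreover have "openin X V"
      using assms(1) \<open>V \<in> \<B>\<close> by blast
    ultimately have "S \<inter> V \<noteq> {}"
      using x unfolding in_closure_of by blast
    then show "\<exists>y. y \<in> S' \<and> y \<in> U"
      using assms(3) \<open>V \<in> \<B>\<close> \<open>V \<subseteq> U\<close> by blast
  qed
qed

lemma second_countable_stationary_subsequence:
  fixes L :: "(nat \<Rightarrow> nat) \<Rightarrow> 'a set"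
  assumes "second_countable X"
    and mono: "\<And>s r. strict_mono r \<Longrightarrow> L s \<subseteq> L (s \<circ> r)"
    and shift: "\<And>s m. L (s \<circ> (+) m) \<subseteq> L s"
  shows "\<exists>d. strict_mono d \<and> (\<forall>r. strict_mono r \<longrightarrow> X closure_of L (d \<circ> r) = X closure_of L d)"
proof -
  obtain \<B> where "countable \<B>" and open_\<B>: "\<forall>V\<in>\<B>. openin X V"
    and base: "\<forall>U x. openin X U \<and> x \<in> U \<longrightarrow> (\<exists>V\<in>\<B>. x \<in> V \<and> V \<subseteq> U)"
    using \<open>second_countable X\<close> unfolding second_countable_def by blast
  \<comment> \<open>\<open>from_nat_into\<close> enumerates only nonempty families; adding \<open>{}\<close> is harmless.\<close>
  define B where "B = from_nat_into (insert {} \<B>)"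
  have range_B: "\<B> \<subseteq> range B"
    unfolding B_def using range_from_nat_into[of "insert {} \<B>"] \<open>countable \<B>\<close> by auto
  obtain d where "strict_mono d"
    and d: "\<forall>r k. strict_mono r \<longrightarrow> L (d \<circ> r) \<inter> B k \<noteq> {} \<longrightarrow> L d \<inter> B k \<noteq> {}"
    using diagonal_subsequence_stably_meets[of L B, OF mono shift] by blast
  have "X closure_of L (d \<circ> r) = X closure_of L d" if "strict_mono r" for r
  proof
    have "\<forall>V\<in>\<B>. L (d \<circ> r) \<inter> V \<noteq> {} \<longrightarrow> L d \<inter> V \<noteq> {}"
      using d that range_B by blast
    then show "X closure_of L (d \<circ> r) \<subseteq> X closure_of L d"
      by (rule closure_of_subset_if_meets_base[OF open_\<B> base])
    show "X closure_of L d \<subseteq> X closure_of L (d \<circ> r)"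
      using closure_of_mono mono[OF that] by blast
  qed
  then show ?thesis
    using \<open>strict_mono d\<close> by blast
qed

lemma rec_set_subsequence:
  assumes "strict_mono r" shows "rec_set p T \<sigma> \<subseteq> rec_set p T (\<sigma> \<circ> r)"
  using limitin_subsequence[OF assms] unfolding rec_set_def by (fastforce simp: comp_def)

lemma rec_set_shift: "rec_set p T (\<sigma> \<circ> (+) m) = rec_set p T \<sigma>"
proof -
  have "(\<lambda>n. (T ^^ (\<sigma> \<circ> (+) m) n) x) = (\<lambda>n. (T ^^ \<sigma> (n + m)) x)" for x
    by (simp add: add.commute)
  then show ?thesis
    unfolding rec_set_def
    using limitin_sequentially_offset limitin_sequentially_offset_rev by fastforce
qed

lemma rec_seqs_subsequence:
  assumes "\<omega> \<in> rec_seqs p T" "strict_mono r" shows "\<omega> \<circ> r \<in> rec_seqs p T"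
  using assms rec_set_subsequence[OF assms(2), of p T \<omega>] strict_mono_o[of \<omega> r]
  unfolding rec_seqs_def pos_strict_seq_def by fastforce

theorem theorem4p2:
  fixes p :: "nat \<Rightarrow> 'a::real_vector \<Rightarrow> real" and T :: "'a \<Rightarrow> 'a"
  assumes "frechet_space p" and "separable_fs p"
    and "continuous_linear_op p T" and "recurrent_op p T"
    and "\<omega> \<in> rec_seqs p T"
  shows "\<exists>r. strict_mono r \<and> stationary p T (\<omega> \<circ> r)"
proof -
  have countable_base: "second_countable (fs_topology p)"
    using assms(1,2) second_countable_fs_topology unfolding frechet_space_def by blast
  have mono: "rec_set p T (\<omega> \<circ> s) \<subseteq> rec_set p T (\<omega> \<circ> (s \<circ> r))" if "strict_mono r" for s r
    using rec_set_subsequence[OF that, of p T "\<omega> \<circ> s"] by (simp add: comp_assoc)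
  have shift: "rec_set p T (\<omega> \<circ> (s \<circ> (+) m)) \<subseteq> rec_set p T (\<omega> \<circ> s)" for s m
    using rec_set_shift[of p T "\<omega> \<circ> s" m] by (simp add: comp_assoc)
  obtain d where "strict_mono d" and closures:
    "\<forall>r. strict_mono r \<longrightarrow>
       fs_topology p closure_of rec_set p T (\<omega> \<circ> (d \<circ> r)) = fs_topology p closure_of rec_set p T (\<omega> \<circ> d)"
    using second_countable_stationary_subsequence[OF countable_base, of "\<lambda>s. rec_set p T (\<omega> \<circ> s)",
        OF mono shift] by blast
  have "stationary p T (\<omega> \<circ> d)"
    unfolding stationary_def
  proof (intro conjI allI impI)
    show "\<omega> \<circ> d \<in> rec_seqs p T"
      using assms(5) \<open>strict_mono d\<close> by (rule rec_seqs_subsequence)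
    fix r :: "nat \<Rightarrow> nat" assume "strict_mono r"
    then show "fs_topology p closure_of rec_set p T (\<omega> \<circ> d) =
        fs_topology p closure_of rec_set p T (\<omega> \<circ> d \<circ> r)"
      using closures[rule_format, OF \<open>strict_mono r\<close>] by (simp only: comp_assoc)
  qed
  with \<open>strict_mono d\<close> show ?thesis
    by (intro exI[of _ d] conjI)
qed

end
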